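(* For all $\tau\in\mathbb{H}$, \[ T_1(\tau)\bigl(T_1(\tau)+T_2(\tau)\bigr)\bigl(1+T_2^2(\tau)\bigr)=T_2(\tau)\bigl(1+T_1(\tau)T_2(\tau)\bigr)\bigl(1+T_1^2(\tau)\bigr). \]
   Context: $q=e^{2\pi i\tau}$, $(a;q)_\infty=\prod_{n\ge0}(1-aq^n)$. Define $T_1(\tau)=\dfrac{(-q;q^5)_\infty(-q^4;q^5)_\infty-(q;q^5)_\infty(q^4;q^5)_\infty}{(-q;q^5)_\infty(-q^4;q^5)_\infty+(q;q^5)_\infty(q^4;q^5)_\infty}$ and $T_2(\tau)=\dfrac{(-q^2;q^5)_\infty(-q^3;q^5)_\infty-(q^2;q^5)_\infty(q^3;q^5)_\infty}{(-q^2;q^5)_\infty(-q^3;q^5)_\infty+(q^2;q^5)_\infty(q^3;q^5)_\infty}$. *)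

theory Defs
  imports "HOL-Analysis.Analysis"
begin

definition qpoch :: "complex \<Rightarrow> complex \<Rightarrow> complex" where
  "qpoch a q = (\<Prod>n. (1 - a * q ^ n))"

definition nome :: "complex \<Rightarrow> complex" where
  "nome \<tau> = exp (2 * pi * \<i> * \<tau>)"

definition T1num :: "complex \<Rightarrow> complex" where
  "T1num \<tau> = (let q = nome \<tau> in
     qpoch (-q) (q^5) * qpoch (-(q^4)) (q^5) - qpoch q (q^5) * qpoch (q^4) (q^5))"
definition T1den :: "complex \<Rightarrow> complex" where
  "T1den \<tau> = (let q = nome \<tau> in
     qpoch (-q) (q^5) * qpoch (-(q^4)) (q^5) + qpoch q (q^5) * qpoch (q^4) (q^5))"
definition T2num :: "complex \<Rightarrow> complex" where
  "T2num \<tau> = (let q = nome \<tau> in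
     qpoch (-(q^2)) (q^5) * qpoch (-(q^3)) (q^5) - qpoch (q^2) (q^5) * qpoch (q^3) (q^5))"
definition T2den :: "complex \<Rightarrow> complex" where
  "T2den \<tau> = (let q = nome \<tau> in
     qpoch (-(q^2)) (q^5) * qpoch (-(q^3)) (q^5) + qpoch (q^2) (q^5) * qpoch (q^3) (q^5))"

definition T1 :: "complex \<Rightarrow> complex" where "T1 \<tau> = T1num \<tau> / T1den \<tau>"
definition T2 :: "complex \<Rightarrow> complex" where "T2 \<tau> = T2num \<tau> / T2den \<tau>"

end

(* Write f(s) for the theta series sum over integers n of q^(10 n^2 + s n).
   By Jacobi's triple product, (q^5;q^5) times the numerator and the denominator
   of T1 are twice the odd and the even part of sum_i q^(5 i (i - 1) / 2) (+-q)^i,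
   and splitting by parity gives T1 = q f(7) / f(3); likewise T2 = q^2 f(9) / f(1).
   Multiplying two series sum_n q^(5 n^2 + x n) and sorting the pairs of indices
   by the parity of their sum expresses the product through the f(s); this gives
   four quadratic relations, and the triple product gives a fifth one,
   f(7) f(3) g(4) = f(9) f(1) g(2) with g(s) = sum_n q^(5 n^2 + s n).
   The identity is an algebraic consequence of these five relations. *)

theory Submission
  imports Defs "HOL-Library.Nat_Bijection"
begin

section \<open>The q-Pochhammer symbol\<close>

lemma norm_power_less_one: "norm q < 1 \<Longrightarrow> 0 < k \<Longrightarrow> norm (q ^ k) < 1"
  for q :: "'a::real_normed_div_algebra"
  by (simp add: norm_power power_less_one_iff)

lemma convergent_prod_one_minus_geometric:
  fixes a q :: "'a::{real_normed_field, banach}"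
  assumes "norm q < 1"
  shows "convergent_prod (\<lambda>n. 1 - a * q ^ n)"
proof (rule abs_convergent_prod_imp_convergent_prod, rule summable_imp_abs_convergent_prod)
  have "summable (\<lambda>n. norm a * norm q ^ n)"
    using assms by (intro summable_mult summable_geometric) auto
  then show "summable (\<lambda>n. norm (1 - a * q ^ n - 1))"
    by (simp add: norm_mult norm_power)
qed

lemma qpoch_LIMSEQ:
  fixes a q :: complex
  assumes "norm q < 1"
  shows "(\<lambda>n. \<Prod>k<n. 1 - a * q ^ k) \<longlonglongrightarrow> qpoch a q"
  unfolding qpoch_def LIMSEQ_lessThan_iff_atMost
  by (rule convergent_prod_LIMSEQ[OF convergent_prod_one_minus_geometric[OF assms]])

lemma qpoch_self_nonzero:
  fixes q :: complex
  assumes "norm q < 1"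
  shows "qpoch q q \<noteq> 0"
proof -
  have "norm (q * q ^ n) < 1" for n
    using assms by (simp add: norm_mult norm_power power_less_one_iff flip: power_Suc)
  then have "1 - q * q ^ n \<noteq> 0" for n
    by (metis norm_one order_less_irrefl right_minus_eq)
  then show ?thesis
    unfolding qpoch_def by (intro prodinf_nonzero convergent_prod_one_minus_geometric assms)
qed

lemma qpoch_even_odd:
  fixes a q :: complex
  assumes "norm q < 1"
  shows "qpoch a q = qpoch a (q\<^sup>2) * qpoch (a * q) (q\<^sup>2)"
proof -
  have q2: "norm (q\<^sup>2) < 1"
    using assms by (simp add: norm_power_less_one)
  have pairs: "(\<Prod>k<2 * n. 1 - a * q ^ k)
      = (\<Prod>k<n. 1 - a * (q\<^sup>2) ^ k) * (\<Prod>k<n. 1 - (a * q) * (q\<^sup>2) ^ k)" for n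
  proof -
    have "(\<Prod>k<n * 2. 1 - a * q ^ k) = (\<Prod>m<n. \<Prod>k\<in>{m * 2..<m * 2 + 2}. 1 - a * q ^ k)"
      by (rule prod.nat_group[symmetric])
    also have "\<dots> = (\<Prod>m<n. (1 - a * (q\<^sup>2) ^ m) * (1 - (a * q) * (q\<^sup>2) ^ m))"
    proof (rule prod.cong[OF refl])
      fix m
      have "{m * 2..<m * 2 + 2} = {m * 2, Suc (m * 2)}"
        by auto
      then show "(\<Prod>k\<in>{m * 2..<m * 2 + 2}. 1 - a * q ^ k)
          = (1 - a * (q\<^sup>2) ^ m) * (1 - (a * q) * (q\<^sup>2) ^ m)"
        by (simp add: power_mult[symmetric] mult.commute mult.left_commute)
    qed
    finally show ?thesis
      by (simp add: prod.distrib mult.commute)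
  qed
  have "(\<lambda>n. \<Prod>k<2 * n. 1 - a * q ^ k) \<longlonglongrightarrow> qpoch a (q\<^sup>2) * qpoch (a * q) (q\<^sup>2)"
    unfolding pairs by (intro tendsto_mult qpoch_LIMSEQ q2)
  moreover have "strict_mono (\<lambda>n::nat. 2 * n)"
    by (auto simp: strict_mono_def)
  then have "(\<lambda>n. \<Prod>k<2 * n. 1 - a * q ^ k) \<longlonglongrightarrow> qpoch a q"
    using LIMSEQ_subseq_LIMSEQ[OF qpoch_LIMSEQ[OF assms]] by (simp add: o_def)
  ultimately show ?thesis
    using LIMSEQ_unique by blast
qed

section \<open>Gaussian binomial coefficients\<close>

fun qbinom :: "'a::comm_semiring_1 \<Rightarrow> nat \<Rightarrow> nat \<Rightarrow> 'a" where
  "qbinom q n 0 = 1"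
| "qbinom q 0 (Suc k) = 0"
| "qbinom q (Suc n) (Suc k) = qbinom q n k + q ^ Suc k * qbinom q n (Suc k)"

text \<open>\<open>qfactorial q n\<close> is \<open>(q;q)\<^sub>n\<close>, the q-factorial up to the factor \<open>(1 - q)\<^sup>n\<close>.\<close>

definition qfactorial :: "'a::comm_ring_1 \<Rightarrow> nat \<Rightarrow> 'a" where
  "qfactorial q n = (\<Prod>k<n. 1 - q ^ Suc k)"

lemma qfactorial_Suc: "qfactorial q (Suc n) = qfactorial q n * (1 - q ^ Suc n)"
  by (simp add: qfactorial_def)

lemma qbinom_eq_0: "n < k \<Longrightarrow> qbinom q n k = 0"
proof (induction n arbitrary: k)
  case 0
  then show ?case by (cases k) auto
next
  case (Suc n)
  then show ?case by (cases k) auto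
qed

lemma Suc_choose_two: "Suc n choose 2 = (n choose 2) + n"
  by (simp add: numeral_2_eq_2)

lemma q_binomial_theorem:
  fixes q x :: "'a::comm_semiring_1"
  shows "(\<Prod>k<n. 1 + x * q ^ k) = (\<Sum>j\<le>n. qbinom q n j * q ^ (j choose 2) * x ^ j)"
proof (induction n arbitrary: x)
  case 0
  then show ?case by (simp add: binomial_eq_0)
next
  case (Suc n)
  define S where "S j = qbinom q n j * q ^ ((j choose 2) + j) * x ^ j" for j
  have "S 0 = 1" "S (Suc n) = 0"
    by (simp_all add: S_def qbinom_eq_0 binomial_eq_0)
  then have shift: "(\<Sum>j\<le>n. S j) = 1 + (\<Sum>j\<le>n. S (Suc j))"
    using sum.atMost_Suc_shift[of S n] sum.atMost_Suc[of S n] by simp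
  have "(\<Prod>k<Suc n. 1 + x * q ^ k) = (1 + x) * (\<Prod>k<n. 1 + (x * q) * q ^ k)"
    by (subst prod.lessThan_Suc_shift) (simp add: mult_ac)
  also have "\<dots> = (1 + x) * (\<Sum>j\<le>n. S j)"
    using Suc.IH[of "x * q"] by (simp add: S_def power_mult_distrib power_add mult_ac)
  also have "\<dots> = (\<Sum>j\<le>n. S j) + x * (\<Sum>j\<le>n. S j)"
    by (simp add: distrib_right)
  also have "\<dots> = 1 + (\<Sum>j\<le>n. x * S j + S (Suc j))"
    by (subst (1) shift) (simp add: sum.distrib sum_distrib_left add_ac)
  also have "\<dots> = 1 + (\<Sum>j\<le>n. qbinom q (Suc n) (Suc j) * q ^ (Suc j choose 2) * x ^ Suc j)"
    by (simp add: S_def algebra_simps power_add Suc_choose_two del: binomial_Suc_Suc)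
  also have "\<dots> = (\<Sum>j\<le>Suc n. qbinom q (Suc n) j * q ^ (j choose 2) * x ^ j)"
    by (subst sum.atMost_Suc_shift) (simp add: binomial_eq_0 del: binomial_Suc_Suc)
  finally show ?case .
qed

lemma qbinom_mult_qfactorial:
  fixes q :: "'a::comm_ring_1"
  shows "k \<le> n \<Longrightarrow> qbinom q n k * qfactorial q k * qfactorial q (n - k) = qfactorial q n"
proof (induction n arbitrary: k)
  case (Suc n)
  show ?case
  proof (cases k)
    case (Suc i)
    with Suc.prems have "i \<le> n"
      by simp
    have "qbinom q n i * qfactorial q (Suc i) * qfactorial q (n - i)
        = (1 - q ^ Suc i) * (qbinom q n i * qfactorial q i * qfactorial q (n - i))"
      by (simp only: qfactorial_Suc mult_ac)
    then have left: "qbinom q n i * qfactorial q (Suc i) * qfactorial q (n - i)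
        = (1 - q ^ Suc i) * qfactorial q n"
      using Suc.IH[OF \<open>i \<le> n\<close>] by simp
    have right: "qbinom q n (Suc i) * qfactorial q (Suc i) * qfactorial q (n - i)
        = (1 - q ^ (n - i)) * qfactorial q n"
    proof (cases "i = n")
      case False
      then have "Suc i \<le> n" "n - i = Suc (n - Suc i)"
        using \<open>i \<le> n\<close> by auto
      then have "qbinom q n (Suc i) * qfactorial q (Suc i) * qfactorial q (n - i)
          = (1 - q ^ (n - i)) * (qbinom q n (Suc i) * qfactorial q (Suc i) * qfactorial q (n - Suc i))"
        by (simp only: qfactorial_Suc mult_ac)
      then show ?thesis
        using Suc.IH[OF \<open>Suc i \<le> n\<close>] by simp
    qed (simp add: qbinom_eq_0)
    have "qbinom q (Suc n) k * qfactorial q k * qfactorial q (Suc n - k)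
        = qbinom q n i * qfactorial q (Suc i) * qfactorial q (n - i)
          + q ^ Suc i * (qbinom q n (Suc i) * qfactorial q (Suc i) * qfactorial q (n - i))"
      using \<open>k = Suc i\<close> by (simp add: algebra_simps del: power_Suc)
    also have "\<dots> = qfactorial q n * (1 - q ^ Suc i * q ^ (n - i))"
      unfolding left right by (simp add: algebra_simps del: power_Suc)
    also have "\<dots> = qfactorial q (Suc n)"
      using \<open>i \<le> n\<close> by (simp add: qfactorial_Suc power_add[symmetric] del: power_Suc)
    finally show ?thesis .
  qed (simp add: qfactorial_def)
qed (simp add: qfactorial_def)

lemma norm_qbinom_le: "norm (qbinom q n k) \<le> qbinom (norm q) n k"
  for q :: "'a::{real_normed_algebra_1, comm_ring_1}"
proof (induction q n k rule: qbinom.induct)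
  case (3 q n k)
  have "norm (qbinom q (Suc n) (Suc k)) \<le> norm (qbinom q n k) + norm (q ^ Suc k * qbinom q n (Suc k))"
    by (simp only: qbinom.simps norm_triangle_ineq)
  also have "\<dots> \<le> norm (qbinom q n k) + norm q ^ Suc k * norm (qbinom q n (Suc k))"
    by (intro add_left_mono order_trans[OF norm_mult_ineq] mult_right_mono norm_power_ineq norm_ge_zero)
  also have "\<dots> \<le> qbinom (norm q) n k + norm q ^ Suc k * qbinom (norm q) n (Suc k)"
    using 3 by (intro add_mono mult_left_mono) auto
  finally show ?case
    by (simp only: qbinom.simps)
qed simp_all

lemma qfactorial_lower_bound:
  fixes r :: real
  assumes "0 \<le> r" "r < 1"
  obtains L where "L > 0" "\<And>n. L \<le> qfactorial r n"
proof -
  define f where "f k = 1 - r * r ^ k" for k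
  have f: "0 < f k" "f k \<le> 1" for k
  proof -
    have "0 \<le> r * r ^ k" "r * r ^ k < 1"
      using assms by (simp_all add: power_less_one_iff flip: power_Suc)
    then show "0 < f k" "f k \<le> 1"
      by (simp_all add: f_def)
  qed
  have conv: "convergent_prod f"
    unfolding f_def by (rule convergent_prod_one_minus_geometric) (use assms in auto)
  have qf: "qfactorial r = (\<lambda>n. prod f {..<n})"
    by (simp add: fun_eq_iff qfactorial_def f_def)
  have lim: "qfactorial r \<longlonglongrightarrow> prodinf f"
    unfolding qf LIMSEQ_lessThan_iff_atMost by (rule convergent_prod_LIMSEQ[OF conv])
  have "decseq (qfactorial r)"
    unfolding decseq_Suc_iff qf using f by (simp add: mult_left_le prod_nonneg less_imp_le)
  then have below: "prodinf f \<le> qfactorial r n" for n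
    using lim by (rule decseq_ge)
  have pos: "0 < qfactorial r n" for n
    unfolding qf using f by (simp add: prod_pos)
  have "prodinf f \<ge> 0"
    using lim by (rule tendsto_lowerbound) (auto intro: always_eventually less_imp_le[OF pos])
  moreover have "prodinf f \<noteq> 0"
    using f by (intro prodinf_nonzero conv) (metis less_irrefl)
  ultimately show ?thesis
    using that[OF _ below] by simp
qed

lemma qbinom_bounded:
  fixes q :: "'a::{real_normed_algebra_1, comm_ring_1}"
  assumes "norm q < 1"
  obtains K where "\<And>n k. norm (qbinom q n k) \<le> K"
proof -
  obtain L where L: "L > 0" "\<And>n. L \<le> qfactorial (norm q) n"
    using qfactorial_lower_bound[of "norm q"] assms by auto
  have "qbinom (norm q) n k \<le> 1 / L\<^sup>2" for n k
  proof (cases "k \<le> n")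
    case True
    have "qfactorial (norm q) n \<le> 1"
      using assms by (auto simp: qfactorial_def intro!: prod_le_1 mult_le_one power_le_one)
    then have "qbinom (norm q) n k * qfactorial (norm q) k * qfactorial (norm q) (n - k) \<le> 1"
      using qbinom_mult_qfactorial[OF True, of "norm q"] by simp
    moreover have "L\<^sup>2 \<le> qfactorial (norm q) k * qfactorial (norm q) (n - k)"
      using L by (auto simp: power2_eq_square intro!: mult_mono order.trans[OF less_imp_le[OF L(1)]])
    then have "qbinom (norm q) n k * L\<^sup>2 \<le> qbinom (norm q) n k * qfactorial (norm q) k * qfactorial (norm q) (n - k)"
      using norm_qbinom_le[of "norm q"] norm_ge_zero order_trans
      by (auto simp: mult.assoc intro!: mult_left_mono)
    ultimately show ?thesis
      using L by (simp add: field_simps)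
  qed (simp add: qbinom_eq_0)
  then show ?thesis
    using that norm_qbinom_le order_trans by metis
qed

lemma qfactorial_LIMSEQ:
  fixes q :: complex
  assumes "norm q < 1"
  shows "qfactorial q \<longlonglongrightarrow> qpoch q q"
proof -
  have "qfactorial q = (\<lambda>n. \<Prod>k<n. 1 - q * q ^ k)"
    by (simp add: fun_eq_iff qfactorial_def)
  then show ?thesis
    using qpoch_LIMSEQ[OF assms, of q] by simp
qed

lemma qfactorial_nonzero:
  fixes q :: "'a::real_normed_field"
  assumes "norm q < 1"
  shows "qfactorial q n \<noteq> 0"
proof -
  have "norm (q * q ^ k) < 1" for k
    using assms by (simp add: norm_mult norm_power power_less_one_iff flip: power_Suc)
  then have "1 - q * q ^ k \<noteq> 0" for k
    by (metis norm_one order_less_irrefl right_minus_eq)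
  then show ?thesis
    by (simp add: qfactorial_def)
qed

lemma qbinom_central_LIMSEQ:
  fixes q :: complex
  assumes "norm q < 1"
  shows "(\<lambda>n. qbinom q (2 * n) (nat (int n + i))) \<longlonglongrightarrow> 1 / qpoch q q"
proof -
  have shift: "(\<lambda>n. qfactorial q (nat (int n + c))) \<longlonglongrightarrow> qpoch q q" for c
  proof -
    have "\<forall>n \<ge> m + nat \<bar>c\<bar>. m \<le> nat (int n + c)" for m
      by auto
    then have "filterlim (\<lambda>n. nat (int n + c)) sequentially sequentially"
      unfolding filterlim_at_top eventually_sequentially by blast
    then show ?thesis
      using filterlim_compose[OF qfactorial_LIMSEQ[OF assms]] by blast
  qed
  have "strict_mono (\<lambda>n::nat. 2 * n)"
    by (auto simp: strict_mono_def)
  then have double: "(\<lambda>n. qfactorial q (2 * n)) \<longlonglongrightarrow> qpoch q q"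
    using LIMSEQ_subseq_LIMSEQ[OF qfactorial_LIMSEQ[OF assms]] by (simp add: o_def)
  have "eventually (\<lambda>n. qbinom q (2 * n) (nat (int n + i))
      = qfactorial q (2 * n) / (qfactorial q (nat (int n + i)) * qfactorial q (nat (int n + - i)))) sequentially"
  proof (rule eventually_sequentiallyI)
    fix n assume "nat \<bar>i\<bar> \<le> n"
    then have "nat (int n + i) \<le> 2 * n" "2 * n - nat (int n + i) = nat (int n + - i)"
      by auto
    then show "qbinom q (2 * n) (nat (int n + i))
        = qfactorial q (2 * n) / (qfactorial q (nat (int n + i)) * qfactorial q (nat (int n + - i)))"
      using qbinom_mult_qfactorial[of "nat (int n + i)" "2 * n" q] qfactorial_nonzero[OF assms]
      by (simp add: field_simps)
  qed
  moreover have "(\<lambda>n. qfactorial q (2 * n) / (qfactorial q (nat (int n + i)) * qfactorial q (nat (int n + - i))))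
      \<longlonglongrightarrow> qpoch q q / (qpoch q q * qpoch q q)"
    using qpoch_self_nonzero[OF assms] by (intro tendsto_intros double shift) simp
  ultimately show ?thesis
    using qpoch_self_nonzero[OF assms] by (simp add: tendsto_cong)
qed

section \<open>Sums over the integers\<close>

lemma summable_on_power_abs_int:
  fixes r :: real
  assumes "0 \<le> r" "r < 1"
  shows "(\<lambda>n::int. r ^ nat \<bar>n\<bar>) summable_on UNIV"
proof -
  have geometric: "(\<lambda>n::nat. r ^ n) summable_on UNIV"
    by (rule norm_summable_imp_summable_on) (use assms in \<open>auto intro!: summable_geometric\<close>)
  have "x \<in> range int \<union> range (\<lambda>n. - int (Suc n))" for x :: int
  proof (cases "x \<ge> 0")
    case True
    then show ?thesis
      by (metis UnI1 nonneg_int_cases rangeI)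
  next
    case False
    then have "x = - int (Suc (nat (- x - 1)))"
      by simp
    then show ?thesis
      by blast
  qed
  then have split: "UNIV = range int \<union> range (\<lambda>n. - int (Suc n))"
    by blast
  have "(\<lambda>n::int. r ^ nat \<bar>n\<bar>) summable_on range int"
    using geometric by (subst summable_on_reindex) (auto simp: o_def)
  moreover have "(\<lambda>n::int. r ^ nat \<bar>n\<bar>) summable_on range (\<lambda>n. - int (Suc n))"
    using summable_on_cmult_right[OF geometric, of r]
    by (subst summable_on_reindex) (auto simp: o_def nat_add_distrib inj_on_def)
  ultimately show ?thesis
    unfolding split by (intro summable_on_Un_disjoint) auto
qed

lemma summable_on_powi_int:
  fixes r :: real
  assumes "0 < r" "r < 1" and exponent: "\<And>n. \<bar>n\<bar> - C \<le> e n"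
  shows "(\<lambda>n::int. r powi e n) summable_on UNIV"
proof (rule summable_on_comparison_test)
  show "(\<lambda>n::int. r powi (- C) * r ^ nat \<bar>n\<bar>) summable_on UNIV"
    by (intro summable_on_cmult_right summable_on_power_abs_int) (use assms in auto)
  show "r powi e n \<le> r powi (- C) * r ^ nat \<bar>n\<bar>" for n
  proof -
    have "r powi e n \<le> r powi (\<bar>n\<bar> - C)"
      by (rule power_int_decreasing) (use assms in auto)
    also have "\<dots> = r powi (- C) * r ^ nat \<bar>n\<bar>"
      using assms by (simp add: power_int_add[symmetric] power_int_nonneg_exp[symmetric] algebra_simps)
    finally show ?thesis .
  qed
qed (use assms in auto)

lemma quadratic_lower_bound: "a - (c + 1)\<^sup>2 \<le> a\<^sup>2 - c * a" for a c :: int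
proof -
  have "0 \<le> (2 * a - (c + 1))\<^sup>2 + 3 * (c + 1)\<^sup>2"
    by simp
  then show ?thesis
    by (simp add: power2_eq_square algebra_simps)
qed

lemma two_times_triangular: "2 * (i * (i - 1) div 2) = i * (i - 1)" for i :: int
  by (simp add: dvd_mult_div_cancel)

lemma infsum_int_decode:
  fixes f :: "int \<Rightarrow> 'a::banach"
  assumes "(\<lambda>i. norm (f i)) summable_on UNIV"
  shows "summable (\<lambda>k. norm (f (int_decode k)))" "infsum f UNIV = (\<Sum>k. f (int_decode k))"
proof -
  have "(\<lambda>k. norm (f (int_decode k))) summable_on UNIV"
    using assms by (subst (asm) surj_int_decode[symmetric], subst (asm) summable_on_reindex)
      (auto simp: inj_int_decode o_def)
  then show summable: "summable (\<lambda>k. norm (f (int_decode k)))"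
    by (rule summable_on_imp_summable)
  have "infsum f UNIV = infsum (\<lambda>k. f (int_decode k)) UNIV"
    by (subst surj_int_decode[symmetric], subst infsum_reindex) (auto simp: inj_int_decode o_def)
  also have "\<dots> = (\<Sum>k. f (int_decode k))"
    by (rule infsumI, rule norm_summable_imp_has_sum[OF summable])
      (rule summable_sums[OF summable_norm_cancel[OF summable]])
  finally show "infsum f UNIV = (\<Sum>k. f (int_decode k))" .
qed

lemma tendsto_infsum_int_dominated:
  fixes f :: "nat \<Rightarrow> int \<Rightarrow> 'a::{real_normed_algebra, banach}"
  assumes lim: "\<And>i. (\<lambda>n. f n i) \<longlonglongrightarrow> g i"
    and bound: "\<And>n i. norm (f n i) \<le> M i" and M: "M summable_on UNIV"
  shows "(\<lambda>n. infsum (f n) UNIV) \<longlonglongrightarrow> infsum g UNIV"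
proof -
  have "norm (g i) \<le> M i" for i
    by (rule tendsto_upperbound[OF tendsto_norm[OF lim]]) (auto intro: always_eventually bound)
  then have "(\<lambda>i. norm (g i)) summable_on UNIV" and "(\<lambda>i. norm (f n i)) summable_on UNIV" for n
    using bound by (auto intro: summable_on_comparison_test[OF M])
  moreover have M_nonneg: "0 \<le> M i" for i
    using bound[of 0 i] norm_ge_zero order_trans by blast
  then have "summable (\<lambda>k. M (int_decode k))"
    using infsum_int_decode(1)[of M] M by simp
  then have "(\<lambda>n. \<Sum>k. f n (int_decode k)) \<longlonglongrightarrow> (\<Sum>k. g (int_decode k))"
    by (intro tannerys_theorem[where M="\<lambda>k. M (int_decode k)", THEN conjunct2, THEN conjunct2])
      (auto intro: lim bound always_eventually)
  ultimately show ?thesis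
    by (simp add: infsum_int_decode(2))
qed

lemma infsum_split_ranges:
  fixes f :: "'a \<Rightarrow> 'b::banach"
  assumes "f summable_on UNIV" "inj g" "inj h"
    and "range g \<inter> range h = {}" "range g \<union> range h = UNIV"
  shows "infsum f UNIV = infsum (f \<circ> g) UNIV + infsum (f \<circ> h) UNIV"
proof -
  have "infsum f (range g \<union> range h) = infsum f (range g) + infsum f (range h)"
    using assms by (intro infsum_Un_disjoint summable_on_subset_banach[OF assms(1)]) auto
  then show ?thesis
    using assms by (simp add: infsum_reindex)
qed

lemma infsum_int_even_odd:
  fixes f :: "int \<Rightarrow> 'a::banach"
  assumes "f summable_on UNIV"
  shows "infsum f UNIV = (\<Sum>\<^sub>\<infinity>m. f (2 * m)) + (\<Sum>\<^sub>\<infinity>m. f (2 * m + 1))"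
proof -
  have "n \<in> range (\<lambda>m. 2 * m) \<union> range (\<lambda>m. 2 * m + 1)" for n :: int
  proof (cases "even n")
    case True
    then show ?thesis
      by (metis UnI1 evenE rangeI)
  next
    case False
    then show ?thesis
      by (metis UnI2 oddE rangeI)
  qed
  moreover have "2 * m \<noteq> 2 * m' + (1::int)" for m m'
    by presburger
  ultimately show ?thesis
    using infsum_split_ranges[OF assms, of "\<lambda>m. 2 * m" "\<lambda>m. 2 * m + 1"]
    by (auto simp: inj_on_def o_def)
qed

lemma infsum_int_pairs_even_odd:
  fixes f :: "int \<times> int \<Rightarrow> 'a::banach"
  assumes "f summable_on UNIV"
  shows "infsum f UNIV = (\<Sum>\<^sub>\<infinity>(m, n). f (m + n, m - n)) + (\<Sum>\<^sub>\<infinity>(m, n). f (m + n + 1, m - n))"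
proof -
  define g :: "int \<times> int \<Rightarrow> int \<times> int" where "g = (\<lambda>(m, n). (m + n, m - n))"
  define h :: "int \<times> int \<Rightarrow> int \<times> int" where "h = (\<lambda>(m, n). (m + n + 1, m - n))"
  have cover: "(s, t) \<in> range g \<union> range h" for s t
  proof (cases "even (s + t)")
    case True
    then obtain u where "s + t = 2 * u"
      by blast
    then have "g (u, s - u) = (s, t)"
      by (simp add: g_def)
    then show ?thesis
      by (metis UnI1 rangeI)
  next
    case False
    then obtain u where "s + t = 2 * u + 1"
      by (blast elim: oddE)
    then have "h (u, s - 1 - u) = (s, t)"
      by (simp add: h_def)
    then show ?thesis
      by (metis UnI2 rangeI)
  qed
  have disjoint: "g (m, n) \<noteq> h (m', n')" for m n m' n'
  proof
    assume "g (m, n) = h (m', n')"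
    then have "m + n = m' + n' + 1" "m - n = m' - n'"
      by (simp_all add: g_def h_def)
    then have "2 * m = 2 * m' + 1"
      by linarith
    then show False
      by presburger
  qed
  have "range g \<union> range h = UNIV"
    using cover by (metis UNIV_eq_I surj_pair)
  moreover have "range g \<inter> range h = {}"
    using disjoint by (metis disjoint_iff rangeE surj_pair)
  moreover have "inj g" "inj h"
    by (auto simp: inj_on_def g_def h_def)
  ultimately show ?thesis
    using infsum_split_ranges[OF assms, of g h] by (simp add: o_def g_def h_def case_prod_unfold)
qed

lemma infsum_mult_infsum:
  fixes g :: "'i \<Rightarrow> 'a::{real_normed_field, banach}" and h :: "'j \<Rightarrow> 'a"
  assumes "(\<lambda>m. norm (g m)) summable_on UNIV" "(\<lambda>n. norm (h n)) summable_on UNIV"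
  shows "(\<lambda>(m, n). g m * h n) summable_on UNIV"
    and "(\<Sum>\<^sub>\<infinity>(m, n). g m * h n) = infsum g UNIV * infsum h UNIV"
proof -
  have "(\<lambda>(m, n). norm (g m) * norm (h n)) summable_on UNIV \<times> UNIV"
  proof (rule summable_on_SigmaI[where g="\<lambda>m. norm (g m) * (\<Sum>\<^sub>\<infinity>n. norm (h n))"])
    show "((\<lambda>n. case (m, n) of (m, n) \<Rightarrow> norm (g m) * norm (h n)) has_sum
        norm (g m) * (\<Sum>\<^sub>\<infinity>n. norm (h n))) UNIV" for m
      by (simp add: has_sum_cmult_right assms(2))
    show "(\<lambda>m. norm (g m) * (\<Sum>\<^sub>\<infinity>n. norm (h n))) summable_on UNIV"
      by (intro summable_on_cmult_left assms(1))
  qed auto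
  then have "(\<lambda>x. norm (case x of (m, n) \<Rightarrow> g m * h n)) summable_on UNIV \<times> UNIV"
    by (simp add: case_prod_unfold norm_mult)
  then have summable: "(\<lambda>(m, n). g m * h n) summable_on UNIV \<times> UNIV"
    by (rule abs_summable_summable)
  then show "(\<lambda>(m, n). g m * h n) summable_on UNIV"
    by simp
  have "(\<Sum>\<^sub>\<infinity>(m, n). g m * h n) = (\<Sum>\<^sub>\<infinity>m. \<Sum>\<^sub>\<infinity>n. g m * h n)"
    using infsum_Sigma_banach[OF summable] by simp
  also have "\<dots> = (\<Sum>\<^sub>\<infinity>m. g m * infsum h UNIV)"
    by (simp only: infsum_cmult_right')
  also have "\<dots> = infsum g UNIV * infsum h UNIV"
    by (rule infsum_cmult_left')
  finally show "(\<Sum>\<^sub>\<infinity>(m, n). g m * h n) = infsum g UNIV * infsum h UNIV" .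
qed

section \<open>Jacobi's triple product identity\<close>

lemma triangular_add:
  "(a + b) * (a + b - 1) div 2 = a * (a - 1) div 2 + b * (b - 1) div 2 + a * b" for a b :: int
proof -
  have "2 * ((a + b) * (a + b - 1) div 2) = 2 * (a * (a - 1) div 2) + 2 * (b * (b - 1) div 2) + 2 * (a * b)"
    by (simp only: two_times_triangular) (simp add: algebra_simps)
  then show ?thesis
    by linarith
qed

lemma int_choose_two: "int (n choose 2) = int n * (int n - 1) div 2"
proof -
  have "int (n * (n - 1)) = int n * (int n - 1)"
    by (cases n) (simp_all add: algebra_simps)
  then show ?thesis
    by (simp only: choose_two zdiv_int of_nat_numeral)
qed

lemma sum_Suc_lessThan: "(\<Sum>k<n. Suc k) = Suc n choose 2"
  by (induction n) (simp_all add: Suc_choose_two del: binomial_Suc_Suc)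

lemma prod_one_plus_reversed:
  fixes q w :: "'a::field"
  assumes "q \<noteq> 0" "w \<noteq> 0"
  shows "(\<Prod>k<n. 1 + (w / q ^ n) * q ^ k) = w ^ n / q ^ (Suc n choose 2) * (\<Prod>k<n. 1 + q ^ Suc k / w)"
proof -
  have "(\<Prod>k<n. 1 + (w / q ^ n) * q ^ k) = (\<Prod>k<n. 1 + (w / q ^ n) * q ^ (n - Suc k))"
    by (rule prod.nat_diff_reindex[symmetric])
  also have "\<dots> = (\<Prod>k<n. w / q ^ Suc k * (1 + q ^ Suc k / w))"
  proof (rule prod.cong[OF refl])
    fix k assume "k \<in> {..<n}"
    then have "n = (n - Suc k) + Suc k"
      by simp
    then have "q ^ n = q ^ (n - Suc k) * q ^ Suc k"
      by (metis power_add)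
    then show "1 + (w / q ^ n) * q ^ (n - Suc k) = w / q ^ Suc k * (1 + q ^ Suc k / w)"
      using assms by (simp add: field_simps)
  qed
  also have "\<dots> = (\<Prod>k<n. w / q ^ Suc k) * (\<Prod>k<n. 1 + q ^ Suc k / w)"
    by (rule prod.distrib)
  also have "(\<Prod>k<n. w / q ^ Suc k) = w ^ n / q ^ (Suc n choose 2)"
    by (simp only: prod_dividef prod_constant card_lessThan power_sum[symmetric] sum_Suc_lessThan)
  finally show ?thesis .
qed

lemma power_choose_two_recentred:
  fixes q w :: "'a::field"
  assumes "q \<noteq> 0" "w \<noteq> 0"
  shows "q ^ (j choose 2) * (w / q ^ n) ^ j
    = w ^ n / q ^ (Suc n choose 2) * (q powi ((int j - int n) * (int j - int n - 1) div 2) * w powi (int j - int n))"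
proof -
  have "(int j - int n) * (int j - int n - 1) div 2 = int (j choose 2) + int (Suc n choose 2) - int (n * j)"
    using triangular_add[of "int j" "- int n"] by (simp add: int_choose_two algebra_simps)
  then have q_part: "q powi ((int j - int n) * (int j - int n - 1) div 2)
      = q ^ (j choose 2) * q ^ (Suc n choose 2) / (q ^ n) ^ j"
    by (simp only: power_int_diff[OF disjI1[OF assms(1)]] power_int_add[OF disjI1[OF assms(1)]]
        power_int_of_nat power_mult)
  have w_part: "w powi (int j - int n) = w ^ j / w ^ n"
    by (simp only: power_int_diff[OF disjI1[OF assms(2)]] power_int_of_nat)
  show ?thesis
    unfolding q_part w_part using assms by (simp add: power_divide field_simps)
qed

text \<open>Apply the q-binomial theorem to \<open>2 n\<close> factors with \<open>x = w / q^n\<close> and recentre the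
  summation index at \<open>n\<close>.\<close>

lemma jacobi_triple_product_finite:
  fixes q w :: "'a::field"
  assumes "q \<noteq> 0" "w \<noteq> 0"
  shows "(\<Sum>i=- int n..int n. qbinom q (2 * n) (nat (int n + i)) * (q powi (i * (i - 1) div 2) * w powi i))
    = (\<Prod>k<n. 1 + q ^ Suc k / w) * (\<Prod>k<n. 1 + w * q ^ k)"
proof -
  define c where "c = w ^ n / q ^ (Suc n choose 2)"
  define t where "t i = q powi (i * (i - 1) div 2) * w powi i" for i :: int
  have "c \<noteq> 0"
    using assms by (simp add: c_def)
  have "(\<Prod>k<2 * n. 1 + (w / q ^ n) * q ^ k)
      = (\<Prod>k<n. 1 + (w / q ^ n) * q ^ k) * (\<Prod>k<n. 1 + (w / q ^ n) * q ^ (k + n))"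
    using prod.atLeastLessThan_concat[of 0 n "2 * n" "\<lambda>k. 1 + (w / q ^ n) * q ^ k"]
      prod.shift_bounds_nat_ivl[of "\<lambda>k. 1 + (w / q ^ n) * q ^ k" 0 n n]
    by (simp add: atLeast0LessThan mult_2)
  also have "(\<Prod>k<n. 1 + (w / q ^ n) * q ^ (k + n)) = (\<Prod>k<n. 1 + w * q ^ k)"
    using assms by (simp add: power_add)
  also have "(\<Prod>k<n. 1 + (w / q ^ n) * q ^ k) * (\<Prod>k<n. 1 + w * q ^ k)
      = c * ((\<Prod>k<n. 1 + q ^ Suc k / w) * (\<Prod>k<n. 1 + w * q ^ k))"
    unfolding prod_one_plus_reversed[OF assms] c_def by (simp only: mult.assoc)
  finally have product: "(\<Prod>k<2 * n. 1 + (w / q ^ n) * q ^ k)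
      = c * ((\<Prod>k<n. 1 + q ^ Suc k / w) * (\<Prod>k<n. 1 + w * q ^ k))" .
  have recentred: "qbinom q (2 * n) j * q ^ (j choose 2) * (w / q ^ n) ^ j = c * (qbinom q (2 * n) j * t (int j - int n))"
    for j
    unfolding mult.assoc power_choose_two_recentred[OF assms] c_def t_def by (simp only: mult_ac)
  have "(\<Prod>k<2 * n. 1 + (w / q ^ n) * q ^ k)
      = (\<Sum>j\<le>2 * n. qbinom q (2 * n) j * q ^ (j choose 2) * (w / q ^ n) ^ j)"
    by (rule q_binomial_theorem)
  also have "\<dots> = c * (\<Sum>j\<le>2 * n. qbinom q (2 * n) j * t (int j - int n))"
    by (simp only: recentred sum_distrib_left)
  also have "(\<Sum>j\<le>2 * n. qbinom q (2 * n) j * t (int j - int n))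
      = (\<Sum>i=- int n..int n. qbinom q (2 * n) (nat (int n + i)) * t i)"
    by (rule sum.reindex_bij_witness[where i="\<lambda>i. nat (int n + i)" and j="\<lambda>j. int j - int n"]) auto
  finally show ?thesis
    using \<open>c \<noteq> 0\<close> product by (simp add: t_def)
qed

lemma powi_le_power_abs:
  fixes x y :: real
  assumes "0 < x" "max x (1 / x) \<le> y"
  shows "x powi i \<le> y ^ nat \<bar>i\<bar>"
proof (cases "0 \<le> i")
  case True
  then have "x powi i = x ^ nat \<bar>i\<bar>"
    by (simp add: power_int_nonneg_exp)
  then show ?thesis
    using assms by (auto intro!: power_mono)
next
  case False
  then have "x powi i = (1 / x) ^ nat \<bar>i\<bar>"
    by (simp add: power_int_def power_inverse inverse_eq_divide)
  then show ?thesis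
    using assms by (auto intro!: power_mono)
qed

lemma triangular_minus_linear_lower_bound:
  "\<bar>i\<bar> - (2 * c + 3)\<^sup>2 \<le> i * (i - 1) div 2 - c * \<bar>i\<bar>" for i c :: int
proof -
  have "\<bar>i\<bar> - (2 * c + 3)\<^sup>2 \<le> i\<^sup>2 - 2 * (c * \<bar>i\<bar>) - 2 * \<bar>i\<bar>"
    using quadratic_lower_bound[of "\<bar>i\<bar>" "2 * c + 2"] by (simp add: algebra_simps)
  moreover have "2 * (i * (i - 1) div 2) = i\<^sup>2 - i"
    by (simp add: two_times_triangular power2_eq_square algebra_simps)
  ultimately show ?thesis
    using abs_ge_self[of i] zero_le_power2[of "2 * c + 3"] by linarith
qed

lemma abs_summable_jacobi_series:
  fixes q w :: complex
  assumes "norm q < 1" "q \<noteq> 0" "w \<noteq> 0"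
  shows "(\<lambda>i::int. norm (q powi (i * (i - 1) div 2) * w powi i)) summable_on UNIV"
proof -
  define r where "r = norm q"
  define x where "x = norm w"
  have r: "0 < r" "r < 1" and "0 < x"
    using assms by (auto simp: r_def x_def)
  obtain m where m: "max x (1 / x) < (1 / r) ^ m"
    using real_arch_pow[of "1 / r" "max x (1 / x)"] r by auto
  have bound: "x powi i \<le> r powi (- (int m * \<bar>i\<bar>))" for i :: int
  proof -
    have "int m * \<bar>i\<bar> = int (m * nat \<bar>i\<bar>)"
      by simp
    then have power_m: "((1 / r) ^ m) ^ nat \<bar>i\<bar> = r powi (- (int m * \<bar>i\<bar>))"
      by (simp only: power_int_minus power_int_of_nat power_mult[symmetric] power_one_over
          inverse_eq_divide)
    from powi_le_power_abs[OF \<open>0 < x\<close> less_imp_le[OF m], of i] show ?thesis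
      unfolding power_m .
  qed
  show ?thesis
  proof (rule summable_on_comparison_test)
    show "(\<lambda>i. r powi (i * (i - 1) div 2 - int m * \<bar>i\<bar>)) summable_on UNIV"
      by (rule summable_on_powi_int[OF r triangular_minus_linear_lower_bound])
    show "norm (q powi (i * (i - 1) div 2) * w powi i) \<le> r powi (i * (i - 1) div 2 - int m * \<bar>i\<bar>)"
      for i :: int
    proof -
      have "norm (q powi (i * (i - 1) div 2) * w powi i) = r powi (i * (i - 1) div 2) * x powi i"
        by (simp add: norm_mult norm_power_int r_def x_def)
      also have "\<dots> \<le> r powi (i * (i - 1) div 2) * r powi (- (int m * \<bar>i\<bar>))"
        using bound r by (intro mult_left_mono) auto
      also have "\<dots> = r powi (i * (i - 1) div 2 - int m * \<bar>i\<bar>)"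
        using r by (simp add: power_int_diff power_int_minus divide_inverse)
      finally show ?thesis .
    qed
  qed simp
qed

lemma tendsto_jacobi_truncations:
  fixes q w :: complex
  assumes q: "norm q < 1" "q \<noteq> 0" and w: "w \<noteq> 0"
  shows "(\<lambda>n. \<Sum>i=- int n..int n. qbinom q (2 * n) (nat (int n + i)) * (q powi (i * (i - 1) div 2) * w powi i))
    \<longlonglongrightarrow> (\<Sum>\<^sub>\<infinity>i::int. q powi (i * (i - 1) div 2) * w powi i) / qpoch q q"
proof -
  define t where "t i = q powi (i * (i - 1) div 2) * w powi i" for i :: int
  obtain K where K: "\<And>n k. norm (qbinom q n k) \<le> K"
    using qbinom_bounded[OF q(1)] by blast
  define F where "F n i = (if \<bar>i\<bar> \<le> int n then qbinom q (2 * n) (nat (int n + i)) else 0) * t i"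
    for n :: nat and i :: int
  have "infsum (F n) UNIV = (\<Sum>i=- int n..int n. F n i)" for n
    by (subst infsum_cong_neutral[where T="{- int n..int n}"]) (auto simp: F_def)
  also have "(\<Sum>i=- int n..int n. F n i) = (\<Sum>i=- int n..int n. qbinom q (2 * n) (nat (int n + i)) * t i)" for n
    by (intro sum.cong refl) (auto simp: F_def)
  finally have truncation: "infsum (F n) UNIV = (\<Sum>i=- int n..int n. qbinom q (2 * n) (nat (int n + i)) * t i)"
    for n .
  have "(\<lambda>n. infsum (F n) UNIV) \<longlonglongrightarrow> infsum (\<lambda>i. t i / qpoch q q) UNIV"
  proof (rule tendsto_infsum_int_dominated)
    show "(\<lambda>n. F n i) \<longlonglongrightarrow> t i / qpoch q q" for i
    proof -
      have "eventually (\<lambda>n. qbinom q (2 * n) (nat (int n + i)) * t i = F n i) sequentially"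
        by (rule eventually_sequentiallyI[of "nat \<bar>i\<bar>"]) (auto simp: F_def)
      moreover have "(\<lambda>n. qbinom q (2 * n) (nat (int n + i)) * t i) \<longlonglongrightarrow> 1 / qpoch q q * t i"
        by (intro tendsto_mult qbinom_central_LIMSEQ q(1) tendsto_const)
      ultimately show ?thesis
        by (simp add: tendsto_cong[symmetric])
    qed
    show "norm (F n i) \<le> K * norm (t i)" for n i
      using K[of 0 0] K by (auto simp: F_def norm_mult intro: mult_right_mono)
    show "(\<lambda>i. K * norm (t i)) summable_on UNIV"
      unfolding t_def by (intro summable_on_cmult_right abs_summable_jacobi_series q w)
  qed
  moreover have "infsum (\<lambda>i. t i / qpoch q q) UNIV = infsum t UNIV / qpoch q q"
    by (simp only: divide_inverse infsum_cmult_left')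
  ultimately show ?thesis
    by (simp add: truncation t_def[abs_def])
qed

theorem jacobi_triple_product:
  fixes q w :: complex
  assumes q: "norm q < 1" "q \<noteq> 0" and w: "w \<noteq> 0"
  shows "(\<Sum>\<^sub>\<infinity>i::int. q powi (i * (i - 1) div 2) * w powi i) = qpoch (- w) q * qpoch (- (q / w)) q * qpoch q q"
proof -
  have "(\<Prod>k<n. 1 + q ^ Suc k / w) = (\<Prod>k<n. 1 - (- (q / w)) * q ^ k)" for n
    by (intro prod.cong refl) (simp add: field_simps)
  moreover have "(\<Prod>k<n. 1 + w * q ^ k) = (\<Prod>k<n. 1 - (- w) * q ^ k)" for n
    by simp
  ultimately have "(\<lambda>n. (\<Prod>k<n. 1 + q ^ Suc k / w) * (\<Prod>k<n. 1 + w * q ^ k))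
      \<longlonglongrightarrow> qpoch (- (q / w)) q * qpoch (- w) q"
    by (simp only:) (intro tendsto_mult qpoch_LIMSEQ q(1))
  then have "(\<Sum>\<^sub>\<infinity>i::int. q powi (i * (i - 1) div 2) * w powi i) / qpoch q q
      = qpoch (- (q / w)) q * qpoch (- w) q"
    using tendsto_jacobi_truncations[OF q w] by (simp add: jacobi_triple_product_finite[OF q(2) w] LIMSEQ_unique)
  then show ?thesis
    using qpoch_self_nonzero[OF q(1)] by (simp add: field_simps)
qed

section \<open>Theta series\<close>

text \<open>\<open>theta q k s\<close> is Ramanujan's \<open>f(q^(k+s), q^(k-s))\<close>.\<close>

definition theta :: "complex \<Rightarrow> int \<Rightarrow> int \<Rightarrow> complex" where
  "theta q k s = (\<Sum>\<^sub>\<infinity>n::int. q powi (k * n\<^sup>2 + s * n))"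

lemma abs_summable_theta:
  fixes q :: complex
  assumes "norm q < 1" "q \<noteq> 0" "k \<ge> 1"
  shows "(\<lambda>n::int. norm (q powi (k * n\<^sup>2 + s * n))) summable_on UNIV"
proof -
  have "\<bar>n\<bar> - (\<bar>s\<bar> + 1)\<^sup>2 \<le> k * n\<^sup>2 + s * n" for n :: int
  proof -
    have "n\<^sup>2 \<le> k * n\<^sup>2"
      using mult_right_mono[OF assms(3), of "n\<^sup>2"] by simp
    moreover have "- (\<bar>s\<bar> * \<bar>n\<bar>) \<le> s * n"
      by (metis abs_ge_minus_self abs_mult minus_le_iff)
    ultimately show ?thesis
      using quadratic_lower_bound[of "\<bar>n\<bar>" "\<bar>s\<bar>"] by simp
  qed
  then show ?thesis
    unfolding norm_power_int using assms by (intro summable_on_powi_int) auto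
qed

lemma infsum_mult_theta:
  fixes q :: complex
  assumes "norm q < 1" "q \<noteq> 0" "k \<ge> 1" "l \<ge> 1"
  shows "(\<lambda>(m, n). q powi (k * m\<^sup>2 + a * m) * q powi (l * n\<^sup>2 + b * n)) summable_on UNIV"
    and "(\<Sum>\<^sub>\<infinity>(m, n). q powi (k * m\<^sup>2 + a * m) * q powi (l * n\<^sup>2 + b * n)) = theta q k a * theta q l b"
  using infsum_mult_infsum[OF abs_summable_theta[OF assms(1-3)] abs_summable_theta[OF assms(1,2,4)]]
  by (simp_all add: theta_def)

lemma theta_uminus: "theta q k (- s) = theta q k s"
proof -
  have "theta q k s = (\<Sum>\<^sub>\<infinity>n \<in> range uminus. q powi (k * n\<^sup>2 + s * n))"
    by (simp add: theta_def surj_def)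
  also have "\<dots> = theta q k (- s)"
    by (subst infsum_reindex) (auto simp: theta_def o_def)
  finally show ?thesis ..
qed

text \<open>Sort the pairs \<open>(a, b)\<close> in the product of the two series by the parity of \<open>a + b\<close>
  and substitute \<open>a = m + n\<close> (resp. \<open>m + n + 1\<close>), \<open>b = m - n\<close>.\<close>

lemma theta_mult_theta:
  fixes q :: complex
  assumes q: "norm q < 1" "q \<noteq> 0" and "k \<ge> 1"
  shows "theta q k x * theta q k y
    = theta q (2 * k) (x + y) * theta q (2 * k) (x - y)
      + q powi (k + x) * (theta q (2 * k) (x + y + 2 * k) * theta q (2 * k) (x - y + 2 * k))"
proof -
  define f where "f = (\<lambda>(a, b). q powi (k * a\<^sup>2 + x * a) * q powi (k * b\<^sup>2 + y * b))"
  have powi_mult: "q powi a * q powi b = q powi (a + b)" for a b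
    using q by (simp add: power_int_add)
  have even: "f (m + n, m - n) = q powi (2 * k * m\<^sup>2 + (x + y) * m) * q powi (2 * k * n\<^sup>2 + (x - y) * n)"
    for m n
    unfolding f_def powi_mult by (simp add: power2_eq_square algebra_simps)
  have odd: "f (m + n + 1, m - n) = q powi (k + x)
      * (q powi (2 * k * m\<^sup>2 + (x + y + 2 * k) * m) * q powi (2 * k * n\<^sup>2 + (x - y + 2 * k) * n))"
    for m n
    unfolding f_def powi_mult by (simp add: power2_eq_square algebra_simps)
  have "theta q k x * theta q k y = infsum f UNIV"
    unfolding f_def using infsum_mult_theta(2)[OF q \<open>k \<ge> 1\<close> \<open>k \<ge> 1\<close>] by simp
  also have "\<dots> = (\<Sum>\<^sub>\<infinity>(m, n). f (m + n, m - n)) + (\<Sum>\<^sub>\<infinity>(m, n). f (m + n + 1, m - n))"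
    using infsum_mult_theta(1)[OF q \<open>k \<ge> 1\<close> \<open>k \<ge> 1\<close>]
    by (intro infsum_int_pairs_even_odd) (simp add: f_def)
  also have "(\<Sum>\<^sub>\<infinity>(m, n). f (m + n, m - n)) = theta q (2 * k) (x + y) * theta q (2 * k) (x - y)"
    unfolding even using \<open>k \<ge> 1\<close> by (intro infsum_mult_theta(2)[OF q]) auto
  also have "(\<Sum>\<^sub>\<infinity>(m, n). f (m + n + 1, m - n)) = (\<Sum>\<^sub>\<infinity>p. q powi (k + x) * (case p of (m, n) \<Rightarrow>
      q powi (2 * k * m\<^sup>2 + (x + y + 2 * k) * m) * q powi (2 * k * n\<^sup>2 + (x - y + 2 * k) * n)))"
    unfolding odd by (simp add: case_prod_unfold)
  also have "\<dots> = q powi (k + x) * (theta q (2 * k) (x + y + 2 * k) * theta q (2 * k) (x - y + 2 * k))"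
    unfolding infsum_cmult_right' using \<open>k \<ge> 1\<close> by (subst infsum_mult_theta(2)[OF q]) auto
  finally show ?thesis .
qed

lemma powi_mult_powi: "q \<noteq> 0 \<Longrightarrow> q powi a * q powi b = q powi (a + b)"
  for q :: complex
  by (simp add: power_int_add)

lemma theta_triple_product:
  fixes q :: complex and k s :: nat
  assumes q: "norm q < 1" "q \<noteq> 0" and "1 \<le> k" "s \<le> k"
  shows "theta q k s = qpoch (- (q ^ (k + s))) (q ^ (2 * k)) * qpoch (- (q ^ (k - s))) (q ^ (2 * k))
    * qpoch (q ^ (2 * k)) (q ^ (2 * k))"
proof -
  have "q ^ (2 * k) = q ^ (k - s) * q ^ (k + s)"
    using \<open>s \<le> k\<close> by (simp add: mult_2 flip: power_add)
  then have quotient: "q ^ (2 * k) / q ^ (k + s) = q ^ (k - s)"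
    using q by simp
  have "(q ^ (2 * k)) powi (i * (i - 1) div 2) * (q ^ (k + s)) powi i = q powi (int k * i\<^sup>2 + int s * i)"
    for i :: int
  proof -
    have "int (2 * k) * (i * (i - 1) div 2) + int (k + s) * i = int k * i\<^sup>2 + int s * i"
      using two_times_triangular[of i] by (simp add: power2_eq_square algebra_simps)
    then show ?thesis
      using q by (simp add: power_int_power powi_mult_powi del: of_nat_mult of_nat_add)
  qed
  then show ?thesis
    using jacobi_triple_product[of "q ^ (2 * k)" "q ^ (k + s)"] q \<open>1 \<le> k\<close>
    by (simp add: theta_def quotient norm_power_less_one)
qed

lemma sign_mult_power_powi_even:
  fixes q \<epsilon> :: complex
  assumes "\<epsilon>\<^sup>2 = 1"
  shows "(\<epsilon> * q ^ j) powi (2 * m) = q powi (2 * int j * m)"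
proof -
  have "(\<epsilon> * q ^ j) powi (2 * m) = ((\<epsilon> * q ^ j)\<^sup>2) powi m"
    by (simp add: power_int_mult)
  also have "(\<epsilon> * q ^ j)\<^sup>2 = q ^ (2 * j)"
    using assms by (simp add: power_mult_distrib power_mult mult.commute)
  finally show ?thesis
    by (simp add: power_int_power mult.commute)
qed

lemma jacobi_term_even_odd:
  fixes q \<epsilon> :: complex and m :: int
  assumes "q \<noteq> 0" and \<epsilon>: "\<epsilon>\<^sup>2 = 1"
  shows "(q ^ k) powi ((2 * m) * (2 * m - 1) div 2) * (\<epsilon> * q ^ j) powi (2 * m)
      = q powi (2 * int k * m\<^sup>2 + (2 * int j - int k) * m)"
    and "(q ^ k) powi ((2 * m + 1) * (2 * m + 1 - 1) div 2) * (\<epsilon> * q ^ j) powi (2 * m + 1)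
      = \<epsilon> * q ^ j * q powi (2 * int k * m\<^sup>2 + (2 * int j + int k) * m)"
proof -
  have "2 * m * (2 * m - 1) div 2 = m * (2 * m - 1)"
    by simp
  then have "(q ^ k) powi ((2 * m) * (2 * m - 1) div 2) * (\<epsilon> * q ^ j) powi (2 * m)
      = q powi (int k * (m * (2 * m - 1)) + 2 * int j * m)"
    by (simp only: sign_mult_power_powi_even[OF \<epsilon>] power_int_power powi_mult_powi[OF assms(1)])
  also have "int k * (m * (2 * m - 1)) + 2 * int j * m = 2 * int k * m\<^sup>2 + (2 * int j - int k) * m"
    by (simp add: power2_eq_square algebra_simps)
  finally show "(q ^ k) powi ((2 * m) * (2 * m - 1) div 2) * (\<epsilon> * q ^ j) powi (2 * m)
      = q powi (2 * int k * m\<^sup>2 + (2 * int j - int k) * m)" .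
  have "\<epsilon> \<noteq> 0"
    using \<epsilon> by auto
  then have "(\<epsilon> * q ^ j) powi (2 * m + 1) = (\<epsilon> * q ^ j) powi (2 * m) * (\<epsilon> * q ^ j)"
    using assms by (simp add: power_int_add)
  also have "\<dots> = \<epsilon> * q ^ j * q powi (2 * int j * m)"
    unfolding sign_mult_power_powi_even[OF \<epsilon>] by (rule mult.commute)
  finally have "(\<epsilon> * q ^ j) powi (2 * m + 1) = \<epsilon> * q ^ j * q powi (2 * int j * m)" .
  moreover have "(2 * m + 1) * (2 * m + 1 - 1) div 2 = m * (2 * m + 1)"
    by simp
  ultimately have "(q ^ k) powi ((2 * m + 1) * (2 * m + 1 - 1) div 2) * (\<epsilon> * q ^ j) powi (2 * m + 1)
      = \<epsilon> * q ^ j * q powi (int k * (m * (2 * m + 1)) + 2 * int j * m)"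
    by (simp only: power_int_power mult.left_commute powi_mult_powi[OF assms(1)])
  also have "int k * (m * (2 * m + 1)) + 2 * int j * m = 2 * int k * m\<^sup>2 + (2 * int j + int k) * m"
    by (simp add: power2_eq_square algebra_simps)
  finally show "(q ^ k) powi ((2 * m + 1) * (2 * m + 1 - 1) div 2) * (\<epsilon> * q ^ j) powi (2 * m + 1)
      = \<epsilon> * q ^ j * q powi (2 * int k * m\<^sup>2 + (2 * int j + int k) * m)" .
qed

lemma jacobi_series_even_odd:
  fixes q \<epsilon> :: complex and k j :: nat
  assumes q: "norm q < 1" "q \<noteq> 0" and "1 \<le> k" and \<epsilon>: "\<epsilon>\<^sup>2 = 1"
  shows "(\<Sum>\<^sub>\<infinity>i::int. (q ^ k) powi (i * (i - 1) div 2) * (\<epsilon> * q ^ j) powi i)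
    = theta q (2 * int k) (2 * int j - int k) + \<epsilon> * q ^ j * theta q (2 * int k) (2 * int j + int k)"
proof -
  have "norm (q ^ k) < 1" "q ^ k \<noteq> 0"
    using q \<open>1 \<le> k\<close> by (simp_all add: norm_power_less_one)
  moreover have "\<epsilon> * q ^ j \<noteq> 0"
    using q \<epsilon> by auto
  ultimately have "(\<lambda>i. (q ^ k) powi (i * (i - 1) div 2) * (\<epsilon> * q ^ j) powi i) summable_on UNIV"
    by (rule abs_summable_summable[OF abs_summable_jacobi_series])
  then show ?thesis
    by (simp only: infsum_int_even_odd jacobi_term_even_odd[OF q(2) \<epsilon>] theta_def
        infsum_cmult_right')
qed

lemma qpoch_pair_eq_theta:
  fixes q \<epsilon> :: complex and k j :: nat
  assumes q: "norm q < 1" "q \<noteq> 0" and "1 \<le> k" "j \<le> k" and \<epsilon>: "\<epsilon>\<^sup>2 = 1"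
  shows "qpoch (- (\<epsilon> * q ^ j)) (q ^ k) * qpoch (- (\<epsilon> * q ^ (k - j))) (q ^ k) * qpoch (q ^ k) (q ^ k)
    = theta q (2 * int k) (2 * int j - int k) + \<epsilon> * q ^ j * theta q (2 * int k) (2 * int j + int k)"
proof -
  have "norm (q ^ k) < 1" "q ^ k \<noteq> 0" "\<epsilon> * q ^ j \<noteq> 0"
    using q \<epsilon> \<open>1 \<le> k\<close> by (auto simp: norm_power_less_one)
  note triple = jacobi_triple_product[OF this]
  have "\<epsilon> * q ^ (k - j) * (\<epsilon> * q ^ j) = \<epsilon>\<^sup>2 * q ^ (k - j + j)"
    by (simp add: power2_eq_square power_add mult_ac)
  also have "\<dots> = q ^ k"
    using \<epsilon> \<open>j \<le> k\<close> by simp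
  finally have "q ^ k / (\<epsilon> * q ^ j) = \<epsilon> * q ^ (k - j)"
    using \<open>\<epsilon> * q ^ j \<noteq> 0\<close> by (simp add: divide_eq_eq)
  then show ?thesis
    using triple jacobi_series_even_odd[OF q \<open>1 \<le> k\<close> \<epsilon>] by simp
qed

section \<open>The identity for \<open>T\<^sub>1\<close> and \<open>T\<^sub>2\<close>\<close>

lemma quotient_of_sum_and_difference:
  fixes A B E b c :: "'a::field_char_0"
  assumes "A * E = b + c" "B * E = b - c" "E \<noteq> 0" "A + B \<noteq> 0"
  shows "b \<noteq> 0" and "(A - B) / (A + B) = c / b"
proof -
  have sum: "(A + B) * E = 2 * b" and difference: "(A - B) * E = 2 * c"
    using assms(1,2) by (simp_all add: algebra_simps)
  then show "b \<noteq> 0"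
    using assms(3,4) by auto
  have "(A - B) / (A + B) = ((A - B) * E) / ((A + B) * E)"
    using assms(3) by simp
  then show "(A - B) / (A + B) = c / b"
    unfolding sum difference by simp
qed

lemma qpoch_quotient_eq_theta_quotient:
  fixes q :: complex and k j :: nat
  assumes q: "norm q < 1" "q \<noteq> 0" and "1 \<le> k" "j \<le> k"
    and "qpoch (- (q ^ j)) (q ^ k) * qpoch (- (q ^ (k - j))) (q ^ k)
      + qpoch (q ^ j) (q ^ k) * qpoch (q ^ (k - j)) (q ^ k) \<noteq> 0"
  shows "theta q (2 * int k) (2 * int j - int k) \<noteq> 0" (is ?nonzero)
    and "(qpoch (- (q ^ j)) (q ^ k) * qpoch (- (q ^ (k - j))) (q ^ k)
        - qpoch (q ^ j) (q ^ k) * qpoch (q ^ (k - j)) (q ^ k))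
      / (qpoch (- (q ^ j)) (q ^ k) * qpoch (- (q ^ (k - j))) (q ^ k)
        + qpoch (q ^ j) (q ^ k) * qpoch (q ^ (k - j)) (q ^ k))
      = q ^ j * theta q (2 * int k) (2 * int j + int k) / theta q (2 * int k) (2 * int j - int k)"
    (is ?quotient)
proof -
  have "qpoch (q ^ k) (q ^ k) \<noteq> 0"
    using q \<open>1 \<le> k\<close> by (intro qpoch_self_nonzero norm_power_less_one) auto
  moreover have "qpoch (- (q ^ j)) (q ^ k) * qpoch (- (q ^ (k - j))) (q ^ k) * qpoch (q ^ k) (q ^ k)
      = theta q (2 * int k) (2 * int j - int k) + q ^ j * theta q (2 * int k) (2 * int j + int k)"
    using qpoch_pair_eq_theta[OF q \<open>1 \<le> k\<close> \<open>j \<le> k\<close>, of 1] by simp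
  moreover have "qpoch (q ^ j) (q ^ k) * qpoch (q ^ (k - j)) (q ^ k) * qpoch (q ^ k) (q ^ k)
      = theta q (2 * int k) (2 * int j - int k) - q ^ j * theta q (2 * int k) (2 * int j + int k)"
    using qpoch_pair_eq_theta[OF q \<open>1 \<le> k\<close> \<open>j \<le> k\<close>, of "- 1"] by simp
  ultimately show ?nonzero and ?quotient
    using quotient_of_sum_and_difference assms(5) by blast+
qed

lemma theta_quadratic_relations:
  fixes q :: complex
  assumes "norm q < 1" "q \<noteq> 0"
  shows "theta q 5 4 * theta q 5 3 = theta q 10 7 * theta q 10 1 + q * theta q 10 3 * theta q 10 9"
    and "theta q 5 2 * theta q 5 1 = theta q 10 3 * theta q 10 1 + q ^ 3 * theta q 10 7 * theta q 10 9"
    and "theta q 5 3 * theta q 5 0 = (theta q 10 3)\<^sup>2 + q\<^sup>2 * (theta q 10 7)\<^sup>2"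
    and "theta q 5 1 * theta q 5 0 = (theta q 10 1)\<^sup>2 + q ^ 4 * (theta q 10 9)\<^sup>2"
  using theta_mult_theta[OF assms, of 5 "- 4" "- 3"] theta_mult_theta[OF assms, of 5 "- 2" "- 1"]
    theta_mult_theta[OF assms, of 5 "- 3" 0] theta_mult_theta[OF assms, of 5 "- 1" 0]
  by (simp_all add: theta_uminus power2_eq_square mult_ac)

text \<open>Splitting each factor of modulus 10 into two of modulus 20 turns both sides into the same
  product of q-Pochhammer symbols.\<close>

lemma theta_cubic_relation:
  fixes q :: complex
  assumes q: "norm q < 1" "q \<noteq> 0"
  shows "theta q 10 7 * theta q 10 3 * theta q 5 4 = theta q 10 9 * theta q 10 1 * theta q 5 2"
proof -
  have split: "qpoch (- (q ^ a)) (q ^ 10) = qpoch (- (q ^ a)) (q ^ 20) * qpoch (- (q ^ (a + 10))) (q ^ 20)" for a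
    using qpoch_even_odd[OF norm_power_less_one[OF q(1)], of 10 "- (q ^ a)"]
    by (simp add: power_add flip: power_mult)
  show ?thesis
    using theta_triple_product[OF q, of 10 7] theta_triple_product[OF q, of 10 3]
      theta_triple_product[OF q, of 10 9] theta_triple_product[OF q, of 10 1]
      theta_triple_product[OF q, of 5 4] theta_triple_product[OF q, of 5 2]
    by (simp add: split split[of 1, simplified] mult_ac)
qed

lemma nome_norm_less_one: "Im \<tau> > 0 \<Longrightarrow> norm (nome \<tau>) < 1"
  by (simp add: nome_def norm_exp_eq_Re)

lemma nome_nonzero: "nome \<tau> \<noteq> 0"
  by (simp add: nome_def)

lemma identity_from_theta_relations:
  fixes q a b c d F1 F2 F3 F4 F5 :: "'a::field"
  assumes "b \<noteq> 0" "d \<noteq> 0"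
    and R1: "F1 * F2 = a * d + q * b * c"
    and R2: "F3 * F4 = b * d + q ^ 3 * a * c"
    and R3: "F2 * F5 = b\<^sup>2 + q\<^sup>2 * a\<^sup>2"
    and R4: "F4 * F5 = d\<^sup>2 + q ^ 4 * c\<^sup>2"
    and R5: "a * b * F1 = c * d * F3"
  shows "(q * a / b) * (q * a / b + q\<^sup>2 * c / d) * (1 + (q\<^sup>2 * c / d)\<^sup>2)
    = (q\<^sup>2 * c / d) * (1 + (q * a / b) * (q\<^sup>2 * c / d)) * (1 + (q * a / b)\<^sup>2)"
proof -
  have "(q * a) * b * ((q * a) * d + b * (q\<^sup>2 * c)) * ((q\<^sup>2 * c)\<^sup>2 + d\<^sup>2)
      = q\<^sup>2 * (a * b * F1) * F2 * (F4 * F5)"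
    using R1 R4 by algebra
  also have "\<dots> = q\<^sup>2 * (c * d * F3) * F2 * (F4 * F5)"
    by (simp only: R5)
  also have "\<dots> = (q\<^sup>2 * c) * d * (b * d + (q * a) * (q\<^sup>2 * c)) * ((q * a)\<^sup>2 + b\<^sup>2)"
    using R2 R3 by algebra
  finally show ?thesis
    using \<open>b \<noteq> 0\<close> \<open>d \<noteq> 0\<close> by (simp add: divide_simps) algebra
qed

theorem corollary3p9:
  fixes \<tau> :: complex
  assumes "Im \<tau> > 0" and "T1den \<tau> \<noteq> 0" and "T2den \<tau> \<noteq> 0"
  shows "T1 \<tau> * (T1 \<tau> + T2 \<tau>) * (1 + (T2 \<tau>)\<^sup>2) = T2 \<tau> * (1 + T1 \<tau> * T2 \<tau>) * (1 + (T1 \<tau>)\<^sup>2)"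
proof -
  define q where "q = nome \<tau>"
  have q: "norm q < 1" "q \<noteq> 0"
    using assms(1) by (simp_all add: q_def nome_norm_less_one nome_nonzero)
  have T1: "theta q 10 3 \<noteq> 0" "T1 \<tau> = q * theta q 10 7 / theta q 10 3"
    using qpoch_quotient_eq_theta_quotient[OF q, of 5 1] assms(2)
    by (simp_all add: T1_def T1num_def T1den_def Let_def theta_uminus flip: q_def)
  have T2: "theta q 10 1 \<noteq> 0" "T2 \<tau> = q\<^sup>2 * theta q 10 9 / theta q 10 1"
    using qpoch_quotient_eq_theta_quotient[OF q, of 5 2] assms(3)
    by (simp_all add: T2_def T2num_def T2den_def Let_def theta_uminus flip: q_def)
  show ?thesis
    unfolding T1(2) T2(2)
    by (rule identity_from_theta_relations[OF T1(1) T2(1) theta_quadratic_relations[OF q]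
          theta_cubic_relation[OF q]])
qed

end
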